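(* For $x=(x_1,x_2),y=(y_1,y_2)\in\mathbb R^2$ define $$d_1(x,y)=|x_1-y_1|+\tan^{-1}(|x_2-y_2|),\qquad d_2(x,y)=|x_2-y_2|+\tan^{-1}(|x_1-y_1|).$$ Then $(\mathbb R^2,d_1)$ and $(\mathbb R^2,d_2)$ are Gromov hyperbolic with $\delta=\pi/2$, but $(\mathbb R^2,d)$ with $d=d_1+d_2$ is not Gromov hyperbolic (for any $\delta\ge0$).
   Context: A metric space $(Y,\rho)$ is Gromov hyperbolic with constant $\delta\ge 0$ if $\rho(x,y)+\rho(z,v)\leq \max\{\rho(x,z)+\rho(y,v),\ \rho(x,v)+\rho(y,z)\}+2\delta$ for all $x,y,z,v\in Y$; it is Gromov hyperbolic if this holds for some $\delta\ge0$. Here $d_1,d_2$ are metrics on $\mathbb R^2$. *)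

theory Defs
  imports "HOL-Analysis.Analysis"
begin

definition gromov_hyperbolic_with :: "('a \<Rightarrow> 'a \<Rightarrow> real) \<Rightarrow> real \<Rightarrow> bool" where
  "gromov_hyperbolic_with \<rho> \<delta> \<longleftrightarrow> \<delta> \<ge> 0 \<and>
     (\<forall>x y z v. \<rho> x y + \<rho> z v \<le> max (\<rho> x z + \<rho> y v) (\<rho> x v + \<rho> y z) + 2 * \<delta>)"

definition gromov_hyperbolic :: "('a \<Rightarrow> 'a \<Rightarrow> real) \<Rightarrow> bool" where
  "gromov_hyperbolic \<rho> \<longleftrightarrow> (\<exists>\<delta>\<ge>0. gromov_hyperbolic_with \<rho> \<delta>)"

definition d1 :: "real \<times> real \<Rightarrow> real \<times> real \<Rightarrow> real" where
  "d1 x y = \<bar>fst x - fst y\<bar> + arctan \<bar>snd x - snd y\<bar>"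

definition d2 :: "real \<times> real \<Rightarrow> real \<times> real \<Rightarrow> real" where
  "d2 x y = \<bar>snd x - snd y\<bar> + arctan \<bar>fst x - fst y\<bar>"

end

theory Submission
  imports Defs
begin

text \<open>The real line is 0-hyperbolic, and each of d1, d2 differs from the pullback of the line
metric under a coordinate projection by an arctan term in [0, pi/2), so they inherit hyperbolicity
with a bounded loss. For d1 + d2, the two diagonals of a square of side t have total length
4t + 4 arctan t, whereas either pair of opposite sides has total length 2t + 2 arctan t; the defect
2t + 2 arctan t is unbounded in t.\<close>

lemma gromov_hyperbolic_with_abs_diff:
  fixes f :: "'a \<Rightarrow> real"
  shows "gromov_hyperbolic_with (\<lambda>x y. \<bar>f x - f y\<bar>) 0"
  unfolding gromov_hyperbolic_with_def
  by (auto simp: abs_if max_def)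

lemma gromov_hyperbolic_with_bounded_perturbation:
  assumes \<sigma>: "gromov_hyperbolic_with \<sigma> 0"
    and lower: "\<And>x y. \<sigma> x y \<le> \<rho> x y"
    and upper: "\<And>x y. \<rho> x y \<le> \<sigma> x y + c"
    and "c \<ge> 0"
  shows "gromov_hyperbolic_with \<rho> c"
  unfolding gromov_hyperbolic_with_def
proof (intro conjI allI)
  fix x y z v
  have "\<rho> x y + \<rho> z v \<le> \<sigma> x y + \<sigma> z v + 2 * c"
    using upper[of x y] upper[of z v] by simp
  also have "\<dots> \<le> max (\<sigma> x z + \<sigma> y v) (\<sigma> x v + \<sigma> y z) + 2 * c"
    using \<sigma> unfolding gromov_hyperbolic_with_def by (simp add: add_right_mono)
  also have "\<dots> \<le> max (\<rho> x z + \<rho> y v) (\<rho> x v + \<rho> y z) + 2 * c"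
    using lower[of x z] lower[of y v] lower[of x v] lower[of y z] by (simp add: max_def)
  finally show "\<rho> x y + \<rho> z v \<le> max (\<rho> x z + \<rho> y v) (\<rho> x v + \<rho> y z) + 2 * c" .
qed (fact \<open>c \<ge> 0\<close>)

lemma gromov_hyperbolic_with_abs_diff_plus_arctan:
  fixes f g :: "'a \<Rightarrow> real"
  shows "gromov_hyperbolic_with (\<lambda>x y. \<bar>f x - f y\<bar> + arctan \<bar>g x - g y\<bar>) (pi / 2)"
proof (rule gromov_hyperbolic_with_bounded_perturbation[OF gromov_hyperbolic_with_abs_diff])
  fix x y
  show "\<bar>f x - f y\<bar> \<le> \<bar>f x - f y\<bar> + arctan \<bar>g x - g y\<bar>"
    by simp
  show "\<bar>f x - f y\<bar> + arctan \<bar>g x - g y\<bar> \<le> \<bar>f x - f y\<bar> + pi / 2"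
    using arctan_ubound[of "\<bar>g x - g y\<bar>"] by simp
qed simp

lemma not_gromov_hyperbolic_d1_plus_d2:
  "\<not> gromov_hyperbolic (\<lambda>x y. d1 x y + d2 x y)"
proof
  assume "gromov_hyperbolic (\<lambda>x y. d1 x y + d2 x y)"
  then obtain \<delta> where "\<delta> \<ge> 0" and hyp: "gromov_hyperbolic_with (\<lambda>x y. d1 x y + d2 x y) \<delta>"
    unfolding gromov_hyperbolic_def by blast
  define t where "t = \<delta> + 1"
  have "t > 0" "arctan t \<ge> 0"
    using \<open>\<delta> \<ge> 0\<close> by (simp_all add: t_def)
  have "d1 (0, 0) (t, t) + d2 (0, 0) (t, t) + (d1 (t, 0) (0, t) + d2 (t, 0) (0, t))
     \<le> max (d1 (0, 0) (t, 0) + d2 (0, 0) (t, 0) + (d1 (t, t) (0, t) + d2 (t, t) (0, t)))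
            (d1 (0, 0) (0, t) + d2 (0, 0) (0, t) + (d1 (t, t) (t, 0) + d2 (t, t) (t, 0))) + 2 * \<delta>"
    using hyp unfolding gromov_hyperbolic_with_def by blast
  then have "2 * t + 2 * arctan t \<le> 2 * \<delta>"
    using \<open>t > 0\<close> by (simp add: d1_def d2_def)
  then show False
    using \<open>arctan t \<ge> 0\<close> t_def by linarith
qed

theorem lemma4p4:
  shows "gromov_hyperbolic_with d1 (pi / 2) \<and> gromov_hyperbolic_with d2 (pi / 2) \<and>
         \<not> gromov_hyperbolic (\<lambda>x y. d1 x y + d2 x y)"
proof (intro conjI)
  show "gromov_hyperbolic_with d1 (pi / 2)"
    using gromov_hyperbolic_with_abs_diff_plus_arctan[of fst snd]
    by (simp add: d1_def [abs_def])
  show "gromov_hyperbolic_with d2 (pi / 2)"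
    using gromov_hyperbolic_with_abs_diff_plus_arctan[of snd fst]
    by (simp add: d2_def [abs_def])
qed (fact not_gromov_hyperbolic_d1_plus_d2)

end
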